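(* Let $\alpha\ge1$, and run the Dual Metric Algorithm (described in the context) on a dual-metric-loss instance, using in Phase 1 any $\alpha$-approximate most cohesive clusters, with growth factor $c=\frac{3\alpha+\sqrt{\alpha(\alpha+8)}}{4\alpha}$, any processing order of agents in Phase 2 and any tie-breaking. Then the output clustering is in the $\frac{1}{2}\left(\alpha+\sqrt{\alpha(\alpha+8)}+2\right)$-core with respect to the dual metric loss.
   Context: Instance: finite nonempty set $\mathcal{N}$ of $n$ agents, finite nonempty set $\mathcal{M}$ of feasible centers, positive integer $k$, pseudometric $d^m$ on $\mathcal{N}$, pseudometric $d^c$ on $\mathcal{N}\cup\mathcal{M}$. Dual metric loss: $\ell_i(C,x)=\max_{j\in C}d^m(i,j)+d^c(i,x)$ for $i\in C\subseteq\mathcal{N}$, $x\in\mathcal{M}$. A clustering is $\mathcal{X}=\{(C_1,x_1),\dots,(C_k,x_k)\}$ with $C_t$ pairwise disjoint (some possibly empty), union $\mathcal{N}$, $x_t\in\mathcal{M}$; $\ell_i(\mathcal{X})=\ell_i(C_t,x_t)$ where $i\in C_t$. For $\beta\ge1$, $\mathcal{X}$ is in the $\beta$-core if there is no $S\subseteq\mathcal{N}$ with $|S|\ge n/k$ and $y\in\mathcal{M}$ with $\beta\,\ell_i(S,y)<\ell_i(\mathcal{X})$ for all $i\in S$. $\alpha$-approximate most cohesive cluster ($\alpha$-MCC) from an agent set $A\subseteq\mathcal{N}$ (threshold $n/k$): a pair $(C,x)$ with $C\subseteq A$, $|C|\ge\min(|A|,n/k)$, $x\in\mathcal{M}$, such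 that $\max_{i\in C}\ell_i(C,x)\le\alpha\max_{i\in S}\ell_i(S,y)$ for every $S\subseteq A$ with $|S|\ge\min(|A|,n/k)$ and every $y\in\mathcal{M}$. Dual Metric Algorithm (parameters $c\ge1$, $\alpha$). Phase 1: set $A\leftarrow\mathcal{N}$, $t\leftarrow1$; while $A\ne\emptyset$: choose an $\alpha$-MCC $(\hat C_t,x_t)$ from $A$, set $r_t=\max_{i\in\hat C_t}\ell_i(\hat C_t,x_t)$, $A\leftarrow A\setminus\hat C_t$, $t\leftarrow t+1$. Let $T$ be the set of indices created (at most $k$), and for $i\in\mathcal{N}$ let $\hat t(i)$ be the index with $i\in\hat C_{\hat t(i)}$. Phase 2: set $C_t\leftarrow\hat C_t$ for $t\in T$; for each agent $i$ in turn: let $t=\hat t(i)$; let $V_i=\{t'\in T:\ d^c(j,x_{t'})+d^m(j,i)\le c\,r_{t'}\text{ for all } j\in\hat C_{t'}\}$; define $\Phi(i,t')=d^c(i,x_{t'})+c\,r_{t'}+\min_{j\in\hat C_{t'}}\big(d^m(i,j)-d^c(j,x_{t'})\big)$; pick $t^*\in\arg\min_{t'\in V_i}\Phi(i,t')$; if $\Phi(i,t^* )<c\,r_t$, remove $i$ from $C_t$ and add it to $C_{t^*}$. Output $\{(C_t,x_t):t\in T\}$, padded with empty clusters (arbitrary centers) to $k$ clusters. *)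

theory Defs
  imports Complex_Main
begin

definition pseudometric_on :: "'p set \<Rightarrow> ('p \<Rightarrow> 'p \<Rightarrow> real) \<Rightarrow> bool" where
  "pseudometric_on S d \<longleftrightarrow>
     (\<forall>x\<in>S. d x x = 0) \<and>
     (\<forall>x\<in>S. \<forall>y\<in>S. d x y = d y x) \<and>
     (\<forall>x\<in>S. \<forall>y\<in>S. \<forall>z\<in>S. d x z \<le> d x y + d y z)"

definition dual_loss ::
  "('p \<Rightarrow> 'p \<Rightarrow> real) \<Rightarrow> ('p \<Rightarrow> 'p \<Rightarrow> real) \<Rightarrow> 'p \<Rightarrow> 'p set \<Rightarrow> 'p \<Rightarrow> real" where
  "dual_loss dm dc i C x = Max ((\<lambda>j. dm i j) ` C) + dc i x"

definition max_loss ::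
  "('p \<Rightarrow> 'p \<Rightarrow> real) \<Rightarrow> ('p \<Rightarrow> 'p \<Rightarrow> real) \<Rightarrow> 'p set \<Rightarrow> 'p \<Rightarrow> real" where
  "max_loss dm dc C x = Max ((\<lambda>i. dual_loss dm dc i C x) ` C)"

definition is_clustering ::
  "'p set \<Rightarrow> 'p set \<Rightarrow> nat \<Rightarrow> ('p set \<times> 'p) list \<Rightarrow> bool" where
  "is_clustering N M k X \<longleftrightarrow>
     length X = k \<and>
     (\<forall>t<k. \<forall>s<k. t \<noteq> s \<longrightarrow> fst (X ! t) \<inter> fst (X ! s) = {}) \<and>
     (\<Union>t<k. fst (X ! t)) = N \<and>
     (\<forall>t<k. snd (X ! t) \<in> M)"

definition clustering_loss ::
  "('p \<Rightarrow> 'p \<Rightarrow> real) \<Rightarrow> ('p \<Rightarrow> 'p \<Rightarrow> real) \<Rightarrow> ('p set \<times> 'p) list \<Rightarrow> 'p \<Rightarrow> real" where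
  "clustering_loss dm dc X i =
     (let t = (THE t. t < length X \<and> i \<in> fst (X ! t))
      in dual_loss dm dc i (fst (X ! t)) (snd (X ! t)))"

definition in_core ::
  "'p set \<Rightarrow> 'p set \<Rightarrow> nat \<Rightarrow> ('p \<Rightarrow> 'p \<Rightarrow> real) \<Rightarrow> ('p \<Rightarrow> 'p \<Rightarrow> real)
   \<Rightarrow> real \<Rightarrow> ('p set \<times> 'p) list \<Rightarrow> bool" where
  "in_core N M k dm dc \<beta> X \<longleftrightarrow>
     is_clustering N M k X \<and>
     \<not> (\<exists>S y. S \<subseteq> N \<and> real (card S) \<ge> real (card N) / real k \<and> y \<in> M \<and>
              (\<forall>i\<in>S. \<beta> * dual_loss dm dc i S y < clustering_loss dm dc X i))"

definition is_MCC ::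
  "'p set \<Rightarrow> 'p set \<Rightarrow> nat \<Rightarrow> ('p \<Rightarrow> 'p \<Rightarrow> real) \<Rightarrow> ('p \<Rightarrow> 'p \<Rightarrow> real)
   \<Rightarrow> real \<Rightarrow> 'p set \<Rightarrow> 'p set \<times> 'p \<Rightarrow> bool" where
  "is_MCC N M k dm dc \<alpha> A Cx \<longleftrightarrow>
     (let C = fst Cx; x = snd Cx; q = min (real (card A)) (real (card N) / real k) in
      C \<subseteq> A \<and> real (card C) \<ge> q \<and> x \<in> M \<and>
      (\<forall>S y. S \<subseteq> A \<and> real (card S) \<ge> q \<and> y \<in> M \<longrightarrow>
              max_loss dm dc C x \<le> \<alpha> * max_loss dm dc S y))"

definition remaining :: "'p set \<Rightarrow> ('p set \<times> 'p) list \<Rightarrow> nat \<Rightarrow> 'p set" where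
  "remaining N P t = N - (\<Union>s<t. fst (P ! s))"

definition phase1_run ::
  "'p set \<Rightarrow> 'p set \<Rightarrow> nat \<Rightarrow> ('p \<Rightarrow> 'p \<Rightarrow> real) \<Rightarrow> ('p \<Rightarrow> 'p \<Rightarrow> real)
   \<Rightarrow> real \<Rightarrow> ('p set \<times> 'p) list \<Rightarrow> bool" where
  "phase1_run N M k dm dc \<alpha> P \<longleftrightarrow>
     (\<forall>t<length P. remaining N P t \<noteq> {} \<and> is_MCC N M k dm dc \<alpha> (remaining N P t) (P ! t)) \<and>
     remaining N P (length P) = {}"

definition radius ::
  "('p \<Rightarrow> 'p \<Rightarrow> real) \<Rightarrow> ('p \<Rightarrow> 'p \<Rightarrow> real) \<Rightarrow> ('p set \<times> 'p) list \<Rightarrow> nat \<Rightarrow> real" where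
  "radius dm dc P t = max_loss dm dc (fst (P ! t)) (snd (P ! t))"

definition Vset ::
  "('p \<Rightarrow> 'p \<Rightarrow> real) \<Rightarrow> ('p \<Rightarrow> 'p \<Rightarrow> real) \<Rightarrow> real \<Rightarrow> ('p set \<times> 'p) list \<Rightarrow> 'p \<Rightarrow> nat set" where
  "Vset dm dc c P i =
     {t'. t' < length P \<and>
          (\<forall>j\<in>fst (P ! t'). dc j (snd (P ! t')) + dm j i \<le> c * radius dm dc P t')}"

definition Phi ::
  "('p \<Rightarrow> 'p \<Rightarrow> real) \<Rightarrow> ('p \<Rightarrow> 'p \<Rightarrow> real) \<Rightarrow> real \<Rightarrow> ('p set \<times> 'p) list \<Rightarrow> 'p \<Rightarrow> nat \<Rightarrow> real" where
  "Phi dm dc c P i t' =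
     dc i (snd (P ! t')) + c * radius dm dc P t' +
     Min ((\<lambda>j. dm i j - dc j (snd (P ! t'))) ` fst (P ! t'))"

text \<open>Phase 2: g i is the index of the final cluster of agent i.  Since V_i and Phi depend only on the Phase 1 data, the outcome
  for agent i does not depend on the processing order; the set of possible outcomes
  over all orders and tie-breakings is exactly the set of g below.\<close>
definition phase2_choice ::
  "'p set \<Rightarrow> ('p \<Rightarrow> 'p \<Rightarrow> real) \<Rightarrow> ('p \<Rightarrow> 'p \<Rightarrow> real) \<Rightarrow> real
   \<Rightarrow> ('p set \<times> 'p) list \<Rightarrow> ('p \<Rightarrow> nat) \<Rightarrow> bool" where
  "phase2_choice N dm dc c P g \<longleftrightarrow>
     (\<forall>t<length P. \<forall>i\<in>fst (P ! t).
        \<exists>tstar\<in>Vset dm dc c P i.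
          (\<forall>t'\<in>Vset dm dc c P i. Phi dm dc c P i tstar \<le> Phi dm dc c P i t') \<and>
          g i = (if Phi dm dc c P i tstar < c * radius dm dc P t then tstar else t))"

text \<open>Output: the Phase 2 clusters with Phase 1 centers, padded with empty clusters
  (arbitrary centers from M) to k clusters.\<close>
definition algorithm_output ::
  "'p set \<Rightarrow> ('p set \<times> 'p) list \<Rightarrow> ('p \<Rightarrow> nat) \<Rightarrow> 'p list \<Rightarrow> ('p set \<times> 'p) list" where
  "algorithm_output N P g pad =
     map (\<lambda>t. ({i\<in>N. g i = t}, snd (P ! t))) [0..<length P] @ map (\<lambda>y. ({}, y)) pad"

end

theory Submission
  imports Defs
begin

(* Suppose a coalition S with center y blocks, let R = max_loss S y, attained by agent a, and let
   t be the first Phase-1 cluster meeting S, say in agent i.  All of S was still available when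
   cluster t was chosen, so r_t <= alpha R.  Agent i ends with loss at most c r_t, hence blocking
   forces d^m(i,a) < (c - 1) r_t, which makes cluster t admissible for a; therefore a ends with
   loss at most Phi(a,t) <= c r_t + R + d^c(i,y), while beta d^c(i,y) < c r_t.  Altogether
   beta * loss(a) < c (beta + 1) alpha R + beta R = beta^2 R, contradicting that a blocks.
   The constants c and beta are exactly the solution of c = beta (c - 1) and
   c alpha (beta + 1) + beta = beta^2. *)

lemma growth_factor_ge_one:
  fixes \<alpha> :: real
  assumes "\<alpha> \<ge> 1"
  shows "1 \<le> (3 * \<alpha> + sqrt (\<alpha> * (\<alpha> + 8))) / (4 * \<alpha>)"
proof -
  have "\<alpha> = sqrt (\<alpha> * \<alpha>)" using assms by simp
  also have "\<dots> \<le> sqrt (\<alpha> * (\<alpha> + 8))" using assms by (intro real_sqrt_le_mono) simp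
  finally show ?thesis using assms by (simp add: field_simps)
qed

lemma growth_core_factor_identities:
  fixes \<alpha> c \<beta> :: real
  assumes "\<alpha> > 0"
    and c: "c = (3 * \<alpha> + sqrt (\<alpha> * (\<alpha> + 8))) / (4 * \<alpha>)"
    and \<beta>: "\<beta> = (\<alpha> + sqrt (\<alpha> * (\<alpha> + 8)) + 2) / 2"
  shows "c = \<beta> * (c - 1)" and "c * \<alpha> * (\<beta> + 1) + \<beta> = \<beta> * \<beta>"
proof -
  define s where "s = sqrt (\<alpha> * (\<alpha> + 8))"
  have s2: "s * s = \<alpha> * \<alpha> + 8 * \<alpha>"
    using assms(1) unfolding s_def by (simp add: algebra_simps)
  have c4: "4 * \<alpha> * c = 3 * \<alpha> + s" and \<beta>2: "2 * \<beta> = \<alpha> + s + 2"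
    using assms unfolding s_def by simp_all
  have "4 * \<alpha> * (\<beta> * (c - 1)) = 4 * \<alpha> * c" using c4 \<beta>2 s2 by algebra
  then show "c = \<beta> * (c - 1)" using assms(1) by simp
  show "c * \<alpha> * (\<beta> + 1) + \<beta> = \<beta> * \<beta>" using c4 \<beta>2 s2 by algebra
qed

lemma pseudometric_on_refl: "pseudometric_on S d \<Longrightarrow> x \<in> S \<Longrightarrow> d x x = 0"
  unfolding pseudometric_on_def by blast

lemma pseudometric_on_sym: "pseudometric_on S d \<Longrightarrow> x \<in> S \<Longrightarrow> y \<in> S \<Longrightarrow> d x y = d y x"
  unfolding pseudometric_on_def by blast

lemma pseudometric_on_triangle:
  "pseudometric_on S d \<Longrightarrow> x \<in> S \<Longrightarrow> y \<in> S \<Longrightarrow> z \<in> S \<Longrightarrow> d x z \<le> d x y + d y z"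
  unfolding pseudometric_on_def by blast

lemma pseudometric_on_nonneg:
  assumes "pseudometric_on S d" "x \<in> S" "y \<in> S"
  shows "d x y \<ge> 0"
  using pseudometric_on_triangle[OF assms(1,2,3,2)] pseudometric_on_refl[OF assms(1,2)]
    pseudometric_on_sym[OF assms] by linarith

lemma dual_loss_ge: "finite C \<Longrightarrow> j \<in> C \<Longrightarrow> dm i j + dc i x \<le> dual_loss dm dc i C x"
  unfolding dual_loss_def by simp

lemma dual_loss_leI:
  assumes "finite C" "C \<noteq> {}" "\<And>j. j \<in> C \<Longrightarrow> dm i j + dc i x \<le> B"
  shows "dual_loss dm dc i C x \<le> B"
proof -
  have "Max (dm i ` C) \<le> B - dc i x" using assms by (force simp: Max_le_iff)
  then show ?thesis unfolding dual_loss_def by simp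
qed

lemma dual_loss_le_max_loss: "finite C \<Longrightarrow> i \<in> C \<Longrightarrow> dual_loss dm dc i C x \<le> max_loss dm dc C x"
  unfolding max_loss_def by simp

lemma max_loss_attained:
  "finite C \<Longrightarrow> C \<noteq> {} \<Longrightarrow> \<exists>a\<in>C. dual_loss dm dc a C x = max_loss dm dc C x"
  unfolding max_loss_def by (metis (no_types, lifting) Max_in finite_imageI image_iff image_is_empty)

locale dual_metric_phase1 =
  fixes N M :: "'p set" and k :: nat
    and dm dc :: "'p \<Rightarrow> 'p \<Rightarrow> real"
    and \<alpha> :: real
    and P :: "('p set \<times> 'p) list"
  assumes finite_N: "finite N" and N_nonempty: "N \<noteq> {}" and k_pos: "k > 0"
    and pseudometric_dm: "pseudometric_on N dm"
    and pseudometric_dc: "pseudometric_on (N \<union> M) dc"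
    and phase1: "phase1_run N M k dm dc \<alpha> P"
begin

abbreviation "m \<equiv> length P"
abbreviation "Chat t \<equiv> fst (P ! t)"
abbreviation "xc t \<equiv> snd (P ! t)"
abbreviation "rem t \<equiv> remaining N P t"
abbreviation "r t \<equiv> radius dm dc P t"

lemma remaining_subset: "rem t \<subseteq> N"
  unfolding remaining_def by auto

lemma remaining_Suc: "rem (Suc t) = rem t - Chat t"
  unfolding remaining_def by (auto simp: lessThan_Suc)

lemma remaining_nonempty: "t < m \<Longrightarrow> rem t \<noteq> {}"
  using phase1 unfolding phase1_run_def by blast

lemma cluster_subset_remaining: "t < m \<Longrightarrow> Chat t \<subseteq> rem t"
  using phase1 unfolding phase1_run_def is_MCC_def Let_def by blast

lemma card_cluster_ge: "t < m \<Longrightarrow> min (real (card (rem t))) (real (card N) / real k) \<le> card (Chat t)"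
  using phase1 unfolding phase1_run_def is_MCC_def Let_def by blast

lemma center_in_M: "t < m \<Longrightarrow> xc t \<in> M"
  using phase1 unfolding phase1_run_def is_MCC_def Let_def by blast

lemma radius_le_MCC:
  assumes "t < m" "S \<subseteq> rem t" "min (real (card (rem t))) (real (card N) / real k) \<le> card S" "y \<in> M"
  shows "r t \<le> \<alpha> * max_loss dm dc S y"
  using phase1 assms unfolding phase1_run_def is_MCC_def Let_def radius_def by blast

lemma cluster_subset: "t < m \<Longrightarrow> Chat t \<subseteq> N"
  using cluster_subset_remaining remaining_subset by blast

lemma finite_cluster: "t < m \<Longrightarrow> finite (Chat t)"
  using cluster_subset finite_N finite_subset by blast

lemma fair_share_pos: "real (card N) / real k > 0"
  using finite_N N_nonempty k_pos by (simp add: card_gt_0_iff)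

lemma cluster_nonempty:
  assumes "t < m"
  shows "Chat t \<noteq> {}"
proof -
  have "card (rem t) > 0"
    using remaining_nonempty[OF assms] remaining_subset finite_N by (meson card_gt_0_iff finite_subset)
  then show ?thesis using card_cluster_ge[OF assms] fair_share_pos by fastforce
qed

lemma exists_cluster: "i \<in> N \<Longrightarrow> \<exists>t<m. i \<in> Chat t"
  using phase1 unfolding phase1_run_def remaining_def by blast

lemma card_remaining_le:
  "t < m \<Longrightarrow> real (card (rem t)) \<le> real (card N) - real t * (real (card N) / real k)"
proof (induction t)
  case 0
  then show ?case by (simp add: remaining_def)
next
  case (Suc t)
  then have t: "t < m" by simp
  have sub: "Chat t \<subseteq> rem t" using cluster_subset_remaining[OF t] .
  have fin: "finite (rem t)" using remaining_subset finite_N finite_subset by blast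
  have "Chat t \<noteq> rem t" using remaining_nonempty[OF Suc.prems] remaining_Suc by auto
  then have less: "card (Chat t) < card (rem t)" using sub fin by (meson psubsetI psubset_card_mono)
  then have "real (card N) / real k \<le> card (Chat t)" using card_cluster_ge[OF t] by linarith
  moreover have "real (card (rem (Suc t))) = real (card (rem t)) - card (Chat t)"
    using remaining_Suc card_Diff_subset[OF finite_subset[OF sub fin] sub] less by simp
  moreover have "real (Suc t) * (real (card N) / real k) = real t * (real (card N) / real k) + real (card N) / real k"
    by (simp add: algebra_simps add_divide_distrib)
  ultimately show ?case using Suc.IH[OF t] by linarith
qed

lemma length_le_k: "m \<le> k"
proof -
  have "m > 0" using phase1 N_nonempty unfolding phase1_run_def remaining_def by force
  then have last: "m - 1 < m" by simp
  have "card (rem (m - 1)) > 0"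
    using remaining_nonempty[OF last] remaining_subset finite_N by (meson card_gt_0_iff finite_subset)
  then have "real (m - 1) * (real (card N) / real k) < real (card N)"
    using card_remaining_le[OF last] by linarith
  then have "real (m - 1) < real k" using fair_share_pos k_pos by (simp add: field_simps)
  then show ?thesis by linarith
qed

lemma cluster_dist_le_radius:
  assumes "t < m" "j \<in> Chat t" "j' \<in> Chat t"
  shows "dm j j' + dc j (xc t) \<le> r t"
  using dual_loss_ge[OF finite_cluster[OF assms(1)] assms(3)]
    dual_loss_le_max_loss[OF finite_cluster[OF assms(1)] assms(2)]
  unfolding radius_def by (rule order_trans)

lemma radius_nonneg:
  assumes "t < m"
  shows "r t \<ge> 0"
proof -
  obtain j where j: "j \<in> Chat t" using cluster_nonempty[OF assms] by blast
  then have "j \<in> N" using cluster_subset[OF assms] by blast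
  then have "0 \<le> dm j j + dc j (xc t)"
    using pseudometric_on_refl[OF pseudometric_dm] pseudometric_on_nonneg[OF pseudometric_dc]
      center_in_M[OF assms] by simp
  then show ?thesis using cluster_dist_le_radius[OF assms j j] by linarith
qed

lemma first_cluster_meeting:
  assumes "S \<subseteq> N" "S \<noteq> {}" "real (card N) / real k \<le> card S" "y \<in> M"
  shows "\<exists>t<m. \<exists>i\<in>S. i \<in> Chat t \<and> r t \<le> \<alpha> * max_loss dm dc S y"
proof -
  define t where "t = (LEAST t. t < m \<and> S \<inter> Chat t \<noteq> {})"
  have "\<exists>t. t < m \<and> S \<inter> Chat t \<noteq> {}" using assms(1,2) exists_cluster by blast
  then have t: "t < m" "S \<inter> Chat t \<noteq> {}" unfolding t_def by (metis (lifting) LeastI_ex)+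
  have "S \<inter> Chat s = {}" if "s < t" for s
    using not_less_Least[OF that[unfolded t_def]] that t(1) by auto
  then have "S \<subseteq> rem t" using assms(1) unfolding remaining_def by blast
  then have "r t \<le> \<alpha> * max_loss dm dc S y" using radius_le_MCC[OF t(1)] assms(3,4) by force
  then show ?thesis using t by blast
qed

lemma in_Vset_if_close:
  assumes "t < m" "i \<in> Chat t" "a \<in> N" "dm i a \<le> (c - 1) * r t"
  shows "t \<in> Vset dm dc c P a"
  unfolding Vset_def
proof (intro CollectI conjI ballI \<open>t < m\<close>)
  fix j assume j: "j \<in> Chat t"
  have "dm j a \<le> dm j i + dm i a"
    using pseudometric_on_triangle[OF pseudometric_dm] j assms(1-3) cluster_subset by blast
  then show "dc j (xc t) + dm j a \<le> c * r t"
    using cluster_dist_le_radius[OF assms(1) j assms(2)] assms(4) by (simp add: algebra_simps)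
qed

lemma Phi_le:
  assumes "t < m" "i \<in> Chat t" "a \<in> N" "y \<in> M"
  shows "Phi dm dc c P a t \<le> c * r t + dm a i + dc a y + dc i y"
proof -
  have iN: "i \<in> N" using assms(1,2) cluster_subset by blast
  have "Min ((\<lambda>j. dm a j - dc j (xc t)) ` Chat t) \<le> dm a i - dc i (xc t)"
    using finite_cluster[OF assms(1)] assms(2) by simp
  moreover have "dc a (xc t) \<le> dc a i + dc i (xc t)" "dc a i \<le> dc a y + dc y i" "dc y i = dc i y"
    using pseudometric_on_triangle[OF pseudometric_dc] pseudometric_on_sym[OF pseudometric_dc]
      iN assms(3,4) center_in_M[OF assms(1)] by blast+
  ultimately show ?thesis unfolding Phi_def by linarith
qed

end

locale dual_metric_phase2 = dual_metric_phase1 +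
  fixes c :: real and g
  assumes c_ge_1: "c \<ge> 1"
    and phase2: "phase2_choice N dm dc c P g"
begin

abbreviation "V i \<equiv> Vset dm dc c P i"
abbreviation "\<Phi> i t \<equiv> Phi dm dc c P i t"
abbreviation "C t \<equiv> {i \<in> N. g i = t}"
abbreviation "final_loss i \<equiv> dual_loss dm dc i (C (g i)) (xc (g i))"

lemma phase2_choiceE:
  assumes "t < m" "i \<in> Chat t"
  obtains ts where "ts \<in> V i" "\<And>t'. t' \<in> V i \<Longrightarrow> \<Phi> i ts \<le> \<Phi> i t'"
    "g i = (if \<Phi> i ts < c * r t then ts else t)"
  using phase2 assms unfolding phase2_choice_def by blast

lemma Vset_less: "t \<in> V i \<Longrightarrow> t < m"
  unfolding Vset_def by simp

lemma final_index_less: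
  assumes "i \<in> N"
  shows "g i < m"
proof -
  obtain t where "t < m" "i \<in> Chat t" using exists_cluster assms by blast
  then show ?thesis by (metis phase2_choiceE Vset_less)
qed

lemma final_cluster_member: "j \<in> N \<Longrightarrow> g j = t \<Longrightarrow> j \<in> Chat t \<or> t \<in> V j"
  by (metis exists_cluster phase2_choiceE)

lemma final_cluster_dist_le:
  assumes "t < m" "j \<in> Chat t" "j' \<in> C t"
  shows "dm j j' + dc j (xc t) \<le> c * r t"
proof (cases "j' \<in> Chat t")
  case True
  have "r t \<le> c * r t" using c_ge_1 radius_nonneg[OF assms(1)] by (simp add: mult_le_cancel_right1)
  then show ?thesis using cluster_dist_le_radius[OF assms(1,2) True] by linarith
next
  case False
  then have "t \<in> V j'" using final_cluster_member assms(3) by blast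
  then show ?thesis using assms(2) unfolding Vset_def by (simp add: add.commute)
qed

lemma final_loss_le_if_stay:
  assumes "t < m" "i \<in> Chat t" "g i = t"
  shows "dual_loss dm dc i (C t) (xc t) \<le> c * r t"
  using finite_N assms cluster_subset by (intro dual_loss_leI final_cluster_dist_le) auto

lemma final_loss_le_Phi:
  assumes "i \<in> N" "t \<in> V i" "g i = t"
  shows "dual_loss dm dc i (C t) (xc t) \<le> \<Phi> i t"
proof -
  have t: "t < m" using Vset_less assms(2) .
  have "dm i j' \<le> c * r t + (dm i j - dc j (xc t))" if j: "j \<in> Chat t" and j': "j' \<in> C t" for j j'
    using pseudometric_on_triangle[OF pseudometric_dm, of i j j'] final_cluster_dist_le[OF t j j']
      assms(1) j' cluster_subset[OF t] j by auto
  then have "dm i j' - c * r t \<le> Min ((\<lambda>j. dm i j - dc j (xc t)) ` Chat t)" if "j' \<in> C t" for j'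
    using that finite_cluster[OF t] cluster_nonempty[OF t] by (subst Min_ge_iff) force+
  then show ?thesis
    using finite_N assms unfolding Phi_def by (intro dual_loss_leI) force+
qed

lemma final_loss_le:
  assumes "t < m" "i \<in> Chat t"
  shows "final_loss i \<le> c * r t" and "\<And>t'. t' \<in> V i \<Longrightarrow> final_loss i \<le> \<Phi> i t'"
proof -
  obtain ts where ts: "ts \<in> V i" "\<And>t'. t' \<in> V i \<Longrightarrow> \<Phi> i ts \<le> \<Phi> i t'"
    "g i = (if \<Phi> i ts < c * r t then ts else t)"
    using phase2_choiceE[OF assms] by blast
  have iN: "i \<in> N" using assms cluster_subset by blast
  have "final_loss i \<le> c * r t \<and> final_loss i \<le> \<Phi> i ts"
  proof (cases "\<Phi> i ts < c * r t")
    case True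
    then show ?thesis using ts(3) final_loss_le_Phi[OF iN ts(1)] by simp
  next
    case False
    then show ?thesis using ts(3) final_loss_le_if_stay[OF assms] by simp
  qed
  then show "final_loss i \<le> c * r t" "\<And>t'. t' \<in> V i \<Longrightarrow> final_loss i \<le> \<Phi> i t'"
    using ts(2) by (blast intro: order_trans)+
qed


lemma final_loss_bound_via_deviator:
  assumes "t < m" "i \<in> Chat t" "a \<in> N" "y \<in> M"
    and "\<beta> > 0" "c = \<beta> * (c - 1)" and deviates: "\<beta> * (dm i a + dc i y) < c * r t"
  shows "\<beta> * final_loss a < c * (\<beta> + 1) * r t + \<beta> * (dm a i + dc a y)"
proof -
  have iN: "i \<in> N" using assms(1,2) cluster_subset by blast
  have dm_ia: "dm i a \<ge> 0" and dc_iy: "dc i y \<ge> 0"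
    using pseudometric_on_nonneg[OF pseudometric_dm] pseudometric_on_nonneg[OF pseudometric_dc]
      iN assms(3,4) by auto
  have "\<beta> * dm i a \<le> \<beta> * (dm i a + dc i y)" using dc_iy \<open>\<beta> > 0\<close> by simp
  also have "\<dots> < c * r t" by (rule deviates)
  also have "\<dots> = \<beta> * ((c - 1) * r t)" using \<open>c = \<beta> * (c - 1)\<close> by (metis mult.assoc)
  finally have "dm i a < (c - 1) * r t" using \<open>\<beta> > 0\<close> by simp
  then have "t \<in> V a" using in_Vset_if_close[OF assms(1-3)] by simp
  moreover obtain ta where "ta < m" "a \<in> Chat ta" using exists_cluster[OF assms(3)] by blast
  ultimately have "final_loss a \<le> \<Phi> a t" using final_loss_le(2) by blast
  then have "\<beta> * final_loss a \<le> \<beta> * (c * r t + dm a i + dc a y + dc i y)"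
    using Phi_le[OF assms(1-4), of c] \<open>\<beta> > 0\<close> by (intro mult_left_mono) auto
  moreover have "\<beta> * dc i y \<le> \<beta> * (dm i a + dc i y)" using dm_ia \<open>\<beta> > 0\<close> by simp
  ultimately show ?thesis using deviates by (simp add: algebra_simps)
qed

lemma length_output: "length (algorithm_output N P g pad) = m + length pad"
  unfolding algorithm_output_def by simp

lemma output_nth:
  "t < length (algorithm_output N P g pad) \<Longrightarrow>
   algorithm_output N P g pad ! t = (if t < m then (C t, xc t) else ({}, pad ! (t - m)))"
  unfolding algorithm_output_def by (simp add: nth_append)

lemma is_clustering_output:
  assumes "set pad \<subseteq> M" "length pad = k - m"
  shows "is_clustering N M k (algorithm_output N P g pad)"
proof -
  have len: "length (algorithm_output N P g pad) = k"
    using length_output assms(2) length_le_k by simp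
  have "N \<subseteq> (\<Union>t<k. fst (algorithm_output N P g pad ! t))"
    using final_index_less length_le_k len output_nth by fastforce
  then show ?thesis
    unfolding is_clustering_def using len output_nth center_in_M assms
    by (auto simp: subset_iff split: if_splits)
qed

lemma clustering_loss_output:
  assumes "i \<in> N"
  shows "clustering_loss dm dc (algorithm_output N P g pad) i = final_loss i"
proof -
  have "(THE t. t < length (algorithm_output N P g pad) \<and> i \<in> fst (algorithm_output N P g pad ! t)) = g i"
    using final_index_less[OF assms] assms length_output output_nth
    by (intro the_equality) (auto split: if_splits)
  then show ?thesis
    unfolding clustering_loss_def Let_def using final_index_less[OF assms] length_output output_nth by simp
qed

theorem output_in_core:
  assumes "\<beta> > 0" and c_eq: "c = \<beta> * (c - 1)" and \<beta>_eq: "c * \<alpha> * (\<beta> + 1) + \<beta> = \<beta> * \<beta>"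
    and pad: "set pad \<subseteq> M" "length pad = k - m"
  shows "in_core N M k dm dc \<beta> (algorithm_output N P g pad)"
  unfolding in_core_def
proof (intro conjI is_clustering_output[OF pad] notI)
  assume "\<exists>S y. S \<subseteq> N \<and> real (card N) / real k \<le> real (card S) \<and> y \<in> M \<and>
    (\<forall>i\<in>S. \<beta> * dual_loss dm dc i S y < clustering_loss dm dc (algorithm_output N P g pad) i)"
  then obtain S y where S: "S \<subseteq> N" "real (card N) / real k \<le> real (card S)" and y: "y \<in> M"
    and blocks: "\<forall>i\<in>S. \<beta> * dual_loss dm dc i S y < clustering_loss dm dc (algorithm_output N P g pad) i"
    by blast
  have blocking: "\<beta> * dual_loss dm dc i S y < final_loss i" if "i \<in> S" for i
  proof -
    have "i \<in> N" using that S(1) by blast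
    then show ?thesis using blocks that clustering_loss_output[of i pad] by metis
  qed
  have fin_S: "finite S" using S(1) finite_N finite_subset by blast
  have "S \<noteq> {}" using S(2) fair_share_pos by auto
  define R where "R = max_loss dm dc S y"
  obtain t i where t: "t < m" and i: "i \<in> S" "i \<in> Chat t" and r_le: "r t \<le> \<alpha> * R"
    using first_cluster_meeting[OF S(1) \<open>S \<noteq> {}\<close> S(2) y] unfolding R_def by blast
  obtain a where a: "a \<in> S" and loss_a: "dual_loss dm dc a S y = R"
    using max_loss_attained[OF fin_S \<open>S \<noteq> {}\<close>] unfolding R_def by blast
  have "\<beta> * (dm i a + dc i y) \<le> \<beta> * dual_loss dm dc i S y"
    using dual_loss_ge[OF fin_S a] \<open>\<beta> > 0\<close> by (intro mult_left_mono) auto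
  also have "\<dots> < c * r t" using blocking[OF i(1)] final_loss_le(1)[OF t i(2)] by linarith
  finally have "\<beta> * final_loss a < c * (\<beta> + 1) * r t + \<beta> * (dm a i + dc a y)"
    using final_loss_bound_via_deviator[OF t i(2) _ y \<open>\<beta> > 0\<close> c_eq] a S(1) by blast
  also have "\<dots> \<le> c * (\<beta> + 1) * (\<alpha> * R) + \<beta> * R"
    using dual_loss_ge[OF fin_S i(1), where i = a and x = y and dm = dm and dc = dc] loss_a r_le
      c_ge_1 \<open>\<beta> > 0\<close> by (intro add_mono mult_left_mono) auto
  also have "\<dots> = (c * \<alpha> * (\<beta> + 1) + \<beta>) * R" by (simp add: algebra_simps)
  also have "\<dots> = \<beta> * (\<beta> * R)" using \<beta>_eq by simp
  finally have "final_loss a < \<beta> * R" using \<open>\<beta> > 0\<close> by simp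
  then show False using blocking[OF a] loss_a by simp
qed

end

theorem mainTheorem5:
  fixes N M :: "'p set" and k :: nat
    and dm dc :: "'p \<Rightarrow> 'p \<Rightarrow> real"
    and \<alpha> c :: real
    and P :: "('p set \<times> 'p) list" and g :: "'p \<Rightarrow> nat" and pad :: "'p list"
  assumes "finite N" "N \<noteq> {}" "finite M" "M \<noteq> {}" "k > 0"
    and "pseudometric_on N dm"
    and "pseudometric_on (N \<union> M) dc"
    and "\<alpha> \<ge> 1"
    and "c = (3 * \<alpha> + sqrt (\<alpha> * (\<alpha> + 8))) / (4 * \<alpha>)"
    and "phase1_run N M k dm dc \<alpha> P"
    and "phase2_choice N dm dc c P g"
    and "set pad \<subseteq> M" and "length pad = k - length P"
  shows "in_core N M k dm dc ((\<alpha> + sqrt (\<alpha> * (\<alpha> + 8)) + 2) / 2)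
           (algorithm_output N P g pad)"
proof -
  have "c \<ge> 1" using growth_factor_ge_one[OF assms(8)] assms(9) by simp
  then interpret dual_metric_phase2 N M k dm dc \<alpha> P c g
    using assms by unfold_locales auto
  define \<beta> where "\<beta> = (\<alpha> + sqrt (\<alpha> * (\<alpha> + 8)) + 2) / 2"
  have "\<alpha> > 0" and "\<beta> > 0" using assms(8) unfolding \<beta>_def by (auto intro!: add_pos_nonneg)
  have "in_core N M k dm dc \<beta> (algorithm_output N P g pad)"
    using output_in_core[OF \<open>\<beta> > 0\<close> growth_core_factor_identities[OF \<open>\<alpha> > 0\<close> assms(9) \<beta>_def]
        assms(12,13)] .
  then show ?thesis unfolding \<beta>_def .
qed

end
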